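(* Let $s=a_1^{m_1}\cdots a_r^{m_r}$ and $t=a_1^{m'_1}\cdots a_r^{m'_r}$ be run-length encodings of two non-empty strings with the same run symbols $a_1,\dots,a_r$ (and $m_i,m'_i\ge1$), and let $D=\{i: m_i\ne m'_i\}$. Write $\mathcal{F}(s)=[\tau_0,\dots,\tau_{k-1}]$ and $\mathcal{F}(t)=[\tau'_0,\dots,\tau'_{k-1}]$ (both have the same length $k$). Then the set of indices $d$ with $\tau_d\ne\tau'_d$ is exactly $\{\min(i,r+1-i): i\in D\}$. In particular, if $s$ and $t$ differ in a single run length $m_i$, then exactly one token differs, namely the one at index $\min(i,r+1-i)$.
   Context: Let $\Sigma$ be an alphabet and $\texttt{@},\texttt{\$}$ two distinct symbols not in $\Sigma$. The run-length encoding of a non-empty string is the unique decomposition $a_1^{m_1}\cdots a_r^{m_r}$ with $a_i\in\Sigma$, $m_i\ge1$, $a_i\ne a_{i+1}$ ($a^m$ is $a$ repeated $m$ times). For $s$ with $|s|=n$ let $\hat s=\texttt{@}\,s\,\texttt{\$}$ (positions $1,\dots,n+2$); $\hat s[i..j)$ is the substring at positions $i,\dots,j-1$. The leading (trailing) run of a non-empty string is its longest prefix (suffix) consisting of one repeated symbol. The Flashback decomposition $\mathcal{F}(s)$ is the sequence of tokens $(\sigma,p)$ (symbol string $\sigma$, integer split position $p\ge0$) produced as follows, starting from active span $[lo,hi)=[1,n+3)$: if $lo\ge hi$, stop. Let $\ell$ be the leading-run length of $\hat s[lo..hi)$. If $\ell=hi-lo$, append $(\hat s[lo..hi),0)$ and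 stop. Otherwise let $\hat s[r'..hi)$ be the trailing run of $\hat s[lo..hi)$ and $\sigma=\hat s[lo..lo+\ell)\cdot\hat s[r'..hi)$; if $lo+\ell\ge r'$, append $(\sigma,0)$ and stop; otherwise append $(\sigma,\ell)$ and repeat with $[lo+\ell,r')$. Tokens are indexed $\tau_0,\tau_1,\dots$ in order of emission. *)

theory Defs
  imports Main
begin

datatype 'a esym = At | Dollar | Sym 'a

definition hat :: "'a list \<Rightarrow> 'a esym list" where
  "hat s = [At] @ map Sym s @ [Dollar]"

definition lead_run_len :: "'b list \<Rightarrow> nat" where
  "lead_run_len w = length (takeWhile (\<lambda>x. x = hd w) w)"

definition trail_run_len :: "'b list \<Rightarrow> nat" where
  "trail_run_len w = length (takeWhile (\<lambda>x. x = last w) (rev w))"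

text \<open>Flashback decomposition applied to the active span w = hat s [lo..hi).
  With l the leading run length and r' = hi - (trailing run length):
  the new span [lo+l, r') is  drop l (take (length w - trail) w).\<close>
function flash :: "'b list \<Rightarrow> ('b list \<times> nat) list" where
  "flash w =
    (if w = [] then []
     else let l = lead_run_len w in
       if l = length w then [(w, 0)]
       else let r' = length w - trail_run_len w;
                \<sigma> = take l w @ drop r' w in
         if l \<ge> r' then [(\<sigma>, 0)]
         else (\<sigma>, l) # flash (drop l (take r' w)))"
  by pat_completeness auto
termination
  apply (relation "measure length")
   apply simp
  apply (auto simp: lead_run_len_def)
  subgoal for w by (cases w) auto
  done

definition flashback :: "'a list \<Rightarrow> ('a esym list \<times> nat) list" where
  "flashback s = flash (hat s)"

definition rle_string :: "'a list \<Rightarrow> nat list \<Rightarrow> 'a list" where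
  "rle_string as ms = concat (map2 (\<lambda>a m. replicate m a) as ms)"

definition valid_rle :: "'a list \<Rightarrow> nat list \<Rightarrow> bool" where
  "valid_rle as ms \<longleftrightarrow> length as = length ms \<and> as \<noteq> [] \<and>
     (\<forall>i < length ms. ms ! i \<ge> 1) \<and>
     (\<forall>i. Suc i < length as \<longrightarrow> as ! i \<noteq> as ! Suc i)"

end

(* The hatted string has the run sequence (@,1) (a_1,m_1) ... (a_r,m_r) ($,1), adjacent runs
   having distinct symbols, so the leading and trailing runs of a span made of whole runs are its
   first and last run.  Each Flashback step therefore strips one run from either end, and token d
   is built from runs d and r+1-d alone: its symbols are their concatenation and its split
   position is the length of run d.  As the run symbols are fixed, the token determines both
   lengths, so tau_d and tau'_d differ iff run d or run r+1-d has changed length, i.e. iff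
   d = min(i, r+1-i) for some i in D. *)

theory Submission
  imports Defs
begin

declare flash.simps [simp del]

lemma list_induct_outer [case_names Nil single outer]:
  assumes "P []" and "\<And>x. P [x]" and "\<And>x ys y. P ys \<Longrightarrow> P (x # ys @ [y])"
  shows "P xs"
proof (induction "length xs" arbitrary: xs rule: less_induct)
  case less
  show ?case
  proof (cases xs rule: rev_cases)
    case (snoc zs y)
    then show ?thesis
      using less assms by (cases zs) auto
  qed (use assms in auto)
qed

lemma replicate_append_replicate_eq_iff:
  assumes "a \<noteq> b"
  shows "replicate m a @ replicate k b = replicate m' a @ replicate k' b \<longleftrightarrow> m = m' \<and> k = k'"
proof
  assume eq: "replicate m a @ replicate k b = replicate m' a @ replicate k' b"
  have "filter (\<lambda>x. x = a) (replicate m a @ replicate k b) = replicate m a" for m k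
    using assms by (simp add: filter_replicate)
  then have "m = m'" using arg_cong[OF eq, of "filter (\<lambda>x. x = a)"] by simp
  with eq show "m = m' \<and> k = k'" by simp
qed simp

definition expand_run :: "'b \<times> nat \<Rightarrow> 'b list" where
  "expand_run x = replicate (snd x) (fst x)"

definition expand_runs :: "('b \<times> nat) list \<Rightarrow> 'b list" where
  "expand_runs xs = concat (map expand_run xs)"

definition proper_runs :: "('b \<times> nat) list \<Rightarrow> bool" where
  "proper_runs xs \<longleftrightarrow> (\<forall>x\<in>set xs. 0 < snd x) \<and> successively (\<lambda>x y. fst x \<noteq> fst y) xs"

lemma length_expand_run [simp]: "length (expand_run x) = snd x"
  by (simp add: expand_run_def)

lemma expand_run_eq_Nil_iff [simp]: "expand_run x = [] \<longleftrightarrow> snd x = 0"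
  by (simp add: expand_run_def)

lemma expand_run_eq_iff: "fst x = fst y \<Longrightarrow> expand_run x = expand_run y \<longleftrightarrow> snd x = snd y"
  by (auto simp: expand_run_def)

lemma expand_runs_simps [simp]:
  "expand_runs [] = []"
  "expand_runs (x # xs) = expand_run x @ expand_runs xs"
  "expand_runs (xs @ ys) = expand_runs xs @ expand_runs ys"
  by (simp_all add: expand_runs_def)

lemma rev_expand_run [simp]: "rev (expand_run x) = expand_run x"
  by (simp add: expand_run_def)

lemma rev_expand_runs: "rev (expand_runs xs) = expand_runs (rev xs)"
  by (induction xs) simp_all

lemma proper_runs_Cons:
  "proper_runs (x # xs) \<longleftrightarrow> 0 < snd x \<and> proper_runs xs \<and> (xs = [] \<or> fst x \<noteq> fst (hd xs))"
  by (auto simp: proper_runs_def successively_Cons)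

lemma proper_runs_appendD: "proper_runs (xs @ ys) \<Longrightarrow> proper_runs xs \<and> proper_runs ys"
  by (auto simp: proper_runs_def successively_append_iff)

lemma proper_runs_rev [simp]: "proper_runs (rev xs) = proper_runs xs"
  by (auto simp: proper_runs_def intro: successively_mono)

lemma expand_runs_eq_Nil_iff: "proper_runs xs \<Longrightarrow> expand_runs xs = [] \<longleftrightarrow> xs = []"
  by (cases xs) (auto simp: proper_runs_Cons expand_run_def)

lemma lead_run_len_expand_runs:
  assumes "proper_runs (x # xs)"
  shows "lead_run_len (expand_runs (x # xs)) = snd x"
proof -
  have "takeWhile (\<lambda>y. y = fst x) (expand_runs xs) = []"
    using assms by (cases xs) (auto simp: proper_runs_Cons expand_run_def)
  then have "takeWhile (\<lambda>y. y = fst x) (expand_runs (x # xs)) = expand_run x"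
    by (simp add: expand_run_def takeWhile_append)
  then show ?thesis
    using assms by (simp add: lead_run_len_def expand_run_def proper_runs_Cons)
qed

lemma trail_run_len_eq_lead_run_len_rev: "trail_run_len w = lead_run_len (rev w)"
  by (cases "w = []") (auto simp: trail_run_len_def lead_run_len_def hd_rev)

lemma trail_run_len_expand_runs:
  assumes "proper_runs (xs @ [y])"
  shows "trail_run_len (expand_runs (xs @ [y])) = snd y"
proof -
  have "proper_runs (y # rev xs)"
    using assms proper_runs_rev[of "xs @ [y]"] by simp
  then show ?thesis
    using lead_run_len_expand_runs by (simp add: trail_run_len_eq_lead_run_len_rev rev_expand_runs)
qed

lemma flash_expand_runs_single:
  assumes "proper_runs [x]"
  shows "flash (expand_runs [x]) = [(expand_run x, 0)]"
  using assms lead_run_len_expand_runs[of x "[]"]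
  by (subst flash.simps) (simp add: proper_runs_def expand_run_def)

lemma flash_expand_runs_pair:
  assumes "proper_runs [x, y]"
  shows "flash (expand_runs [x, y]) = [(expand_run x @ expand_run y, 0)]"
proof -
  have "lead_run_len (expand_runs [x, y]) = snd x" "trail_run_len (expand_runs ([x] @ [y])) = snd y"
    using assms lead_run_len_expand_runs[of x "[y]"] trail_run_len_expand_runs[of "[x]" y]
    by simp_all
  moreover have "0 < snd y"
    using assms by (simp add: proper_runs_def)
  ultimately show ?thesis
    by (subst flash.simps) (simp add: Let_def)
qed

lemma flash_expand_runs_outer:
  assumes "proper_runs (x # ys @ [y])" and "ys \<noteq> []"
  shows "flash (expand_runs (x # ys @ [y])) =
    (expand_run x @ expand_run y, snd x) # flash (expand_runs ys)"
proof -
  have "lead_run_len (expand_runs (x # ys @ [y])) = snd x"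
    "trail_run_len (expand_runs ((x # ys) @ [y])) = snd y"
    using assms lead_run_len_expand_runs[of x "ys @ [y]"] trail_run_len_expand_runs[of "x # ys" y]
    by simp_all
  moreover have "expand_runs ys \<noteq> []"
    using assms proper_runs_appendD[of "x # ys" "[y]"]
    by (simp add: proper_runs_Cons expand_runs_eq_Nil_iff)
  ultimately show ?thesis
    by (subst flash.simps) (simp add: Let_def)
qed

(* Once at most two runs are left the leading run reaches the trailing one, and flash emits
   split position 0. *)
definition flash_token :: "('b \<times> nat) list \<Rightarrow> nat \<Rightarrow> 'b list \<times> nat" where
  "flash_token xs d = (let n = length xs in
     if n = 2 * d + 1 then (expand_run (xs ! d), 0)
     else (expand_run (xs ! d) @ expand_run (xs ! (n - 1 - d)),
           if n = 2 * d + 2 then 0 else snd (xs ! d)))"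

lemma flash_token_Cons_snoc:
  "2 * d < length ys \<Longrightarrow> flash_token (x # ys @ [y]) (Suc d) = flash_token ys d"
  by (auto simp: flash_token_def Let_def nth_append nth_Cons')

lemma flash_expand_runs:
  "proper_runs xs \<Longrightarrow> flash (expand_runs xs) = map (flash_token xs) [0..<(length xs + 1) div 2]"
proof (induction xs rule: list_induct_outer)
  case Nil
  then show ?case by (simp add: flash.simps)
next
  case (single x)
  then show ?case
    using flash_expand_runs_single by (simp add: flash_token_def)
next
  case (outer x ys y)
  show ?case
  proof (cases "ys = []")
    case True
    then show ?thesis
      using outer.prems flash_expand_runs_pair by (simp add: flash_token_def)
  next
    case False
    have "proper_runs ys"
      using outer.prems proper_runs_appendD[of "x # ys" "[y]"] by (simp add: proper_runs_Cons)
    then have "flash (expand_runs ys) = map (flash_token ys) [0..<(length ys + 1) div 2]"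
      by (rule outer.IH)
    also have "\<dots> = map (flash_token (x # ys @ [y]) \<circ> Suc) [0..<(length ys + 1) div 2]"
      by (auto intro!: map_cong flash_token_Cons_snoc[symmetric])
    finally have "flash (expand_runs (x # ys @ [y])) =
        flash_token (x # ys @ [y]) 0 # map (flash_token (x # ys @ [y]) \<circ> Suc) [0..<(length ys + 1) div 2]"
      using flash_expand_runs_outer[OF outer.prems False] False by (simp add: flash_token_def)
    moreover have "[0..<(length (x # ys @ [y]) + 1) div 2] = 0 # map Suc [0..<(length ys + 1) div 2]"
      by (simp add: map_Suc_upt upt_conv_Cons del: upt_Suc)
    ultimately show ?thesis
      by (simp del: upt_Suc)
  qed
qed

lemma flash_token_eq_iff:
  assumes "proper_runs xs" and "map fst xs = map fst ys" and "d < (length xs + 1) div 2"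
  defines "i \<equiv> length xs - 1 - d"
  shows "flash_token xs d = flash_token ys d \<longleftrightarrow>
    snd (xs ! d) = snd (ys ! d) \<and> snd (xs ! i) = snd (ys ! i)"
proof -
  have len: "length ys = length xs"
    using assms(2) by (metis length_map)
  have "d < length xs" "i < length xs"
    using assms(3) by (auto simp: i_def)
  then have fst_d: "fst (xs ! d) = fst (ys ! d)" and fst_i: "fst (xs ! i) = fst (ys ! i)"
    using assms(2) len by (metis nth_map)+
  consider "length xs = 2 * d + 1" | "length xs = 2 * d + 2" | "length xs > 2 * d + 2"
    using assms(3) by linarith
  then show ?thesis
  proof cases
    case 1
    then have "i = d" by (simp add: i_def)
    then show ?thesis
      using 1 len fst_d by (simp add: flash_token_def expand_run_eq_iff)
  next
    case 2
    then have "i = Suc d"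
      by (simp add: i_def)
    moreover have "fst (xs ! d) \<noteq> fst (xs ! Suc d)"
      using assms(1) 2 by (simp add: proper_runs_def successively_conv_nth)
    ultimately show ?thesis
      using 2 len fst_d fst_i
      by (simp add: flash_token_def expand_run_def replicate_append_replicate_eq_iff)
  next
    case 3
    \<comment> \<open>Runs d and i may carry the same symbol; the split position tells them apart.\<close>
    then show ?thesis
      using len fst_d fst_i by (auto simp: flash_token_def i_def expand_run_eq_iff)
  qed
qed

lemma image_min_mirror:
  fixes n :: nat
  assumes "M \<subseteq> {..<n}"
  shows "(\<lambda>i. min i (n - 1 - i)) ` M = {d. d < (n + 1) div 2 \<and> (d \<in> M \<or> n - 1 - d \<in> M)}"
proof (intro equalityI subsetI)
  fix d assume "d \<in> (\<lambda>i. min i (n - 1 - i)) ` M"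
  then obtain i where "i \<in> M" "d = min i (n - 1 - i)" by blast
  moreover have "i < n" using assms \<open>i \<in> M\<close> by blast
  ultimately show "d \<in> {d. d < (n + 1) div 2 \<and> (d \<in> M \<or> n - 1 - d \<in> M)}"
    by (cases "i \<le> n - 1 - i") (auto simp: min_def)
next
  fix d assume "d \<in> {d. d < (n + 1) div 2 \<and> (d \<in> M \<or> n - 1 - d \<in> M)}"
  then have "d < (n + 1) div 2" and "d \<in> M \<or> n - 1 - d \<in> M" by blast+
  then show "d \<in> (\<lambda>i. min i (n - 1 - i)) ` M"
  proof (elim disjE)
    assume "d \<in> M"
    then show ?thesis
      using \<open>d < (n + 1) div 2\<close> by (intro rev_image_eqI[of d]) auto
  next
    assume "n - 1 - d \<in> M"
    then show ?thesis
      using \<open>d < (n + 1) div 2\<close> by (intro rev_image_eqI[of "n - 1 - d"]) auto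
  qed
qed

theorem flash_expand_runs_mismatch:
  assumes "proper_runs xs" and "proper_runs ys" and "map fst xs = map fst ys"
  shows "length (flash (expand_runs xs)) = length (flash (expand_runs ys))"
    and "{d. d < length (flash (expand_runs xs)) \<and> flash (expand_runs xs) ! d \<noteq> flash (expand_runs ys) ! d}
      = (\<lambda>i. min i (length xs - 1 - i)) ` {i. i < length xs \<and> snd (xs ! i) \<noteq> snd (ys ! i)}"
proof -
  have len: "length ys = length xs"
    using assms(3) by (metis length_map)
  then show "length (flash (expand_runs xs)) = length (flash (expand_runs ys))"
    using assms(1,2) by (simp add: flash_expand_runs)
  let ?M = "{i. i < length xs \<and> snd (xs ! i) \<noteq> snd (ys ! i)}"
  have "{d. d < length (flash (expand_runs xs)) \<and> flash (expand_runs xs) ! d \<noteq> flash (expand_runs ys) ! d}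
      = {d. d < (length xs + 1) div 2 \<and> flash_token xs d \<noteq> flash_token ys d}"
    using assms(1,2) len by (auto simp: flash_expand_runs)
  also have "\<dots> = {d. d < (length xs + 1) div 2 \<and> (d \<in> ?M \<or> length xs - 1 - d \<in> ?M)}"
    using flash_token_eq_iff[OF assms(1,3)] by auto
  also have "\<dots> = (\<lambda>i. min i (length xs - 1 - i)) ` ?M"
    by (rule image_min_mirror[symmetric]) auto
  finally show "{d. d < length (flash (expand_runs xs)) \<and> flash (expand_runs xs) ! d \<noteq> flash (expand_runs ys) ! d}
      = (\<lambda>i. min i (length xs - 1 - i)) ` ?M" .
qed

definition framed_runs :: "'a list \<Rightarrow> nat list \<Rightarrow> ('a esym \<times> nat) list" where
  "framed_runs as ms = (At, 1) # zip (map Sym as) ms @ [(Dollar, 1)]"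

lemma hat_rle_string:
  "length as = length ms \<Longrightarrow> hat (rle_string as ms) = expand_runs (framed_runs as ms)"
proof (induction as arbitrary: ms)
  case (Cons a as)
  then show ?case
    by (cases ms) (auto simp: hat_def framed_runs_def rle_string_def expand_run_def)
qed (simp add: hat_def framed_runs_def rle_string_def expand_run_def)

lemma proper_framed_runs:
  assumes "valid_rle as ms"
  shows "proper_runs (framed_runs as ms)"
proof -
  let ?z = "zip (map Sym as) ms"
  have len: "length as = length ms" and "as \<noteq> []"
    using assms by (auto simp: valid_rle_def)
  then have "?z \<noteq> []"
    by (cases as; cases ms) auto
  moreover have "fst x \<in> range Sym" if "x \<in> set ?z" for x
    using that set_zip_leftD[of "fst x" "snd x" "map Sym as" ms] by auto
  ultimately have "fst (hd ?z) \<noteq> At" and "fst (last ?z) \<noteq> Dollar"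
    by (metis esym.distinct hd_in_set last_in_set rangeE)+
  moreover have "\<forall>x\<in>set ?z. 0 < snd x"
    using assms len by (auto simp: valid_rle_def set_zip)
  moreover have "successively (\<lambda>x y. fst x \<noteq> fst y) ?z"
    using assms len by (auto simp: valid_rle_def successively_conv_nth)
  ultimately show ?thesis
    using \<open>?z \<noteq> []\<close>
    by (auto simp: proper_runs_def framed_runs_def successively_Cons successively_append_iff)
qed

lemma framed_runs_mismatch:
  assumes "length as = length ms" and "length as = length ms'"
  shows "{i. i < length (framed_runs as ms) \<and> snd (framed_runs as ms ! i) \<noteq> snd (framed_runs as ms' ! i)}
    = {i \<in> {1..length as}. ms ! (i - 1) \<noteq> ms' ! (i - 1)}"
  using assms by (auto simp: framed_runs_def nth_Cons' nth_append)

theorem proposition6p8: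
  fixes as :: "'a list" and ms ms' :: "nat list"
  assumes "valid_rle as ms" and "valid_rle as ms'"
  defines "r \<equiv> length as"
  defines "D \<equiv> {i \<in> {1..r}. ms ! (i - 1) \<noteq> ms' ! (i - 1)}"
  shows "length (flashback (rle_string as ms)) = length (flashback (rle_string as ms')) \<and>
         {d. d < length (flashback (rle_string as ms)) \<and>
             flashback (rle_string as ms) ! d \<noteq> flashback (rle_string as ms') ! d}
           = (\<lambda>i. min i (r + 1 - i)) ` D"
proof -
  have len: "length as = length ms" "length as = length ms'"
    using assms(1,2) by (simp_all add: valid_rle_def)
  have flashback: "flashback (rle_string as ms) = flash (expand_runs (framed_runs as ms))"
    "flashback (rle_string as ms') = flash (expand_runs (framed_runs as ms'))"
    using len by (simp_all add: flashback_def hat_rle_string)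
  have "map fst (framed_runs as ms) = map fst (framed_runs as ms')"
    using len by (simp add: framed_runs_def)
  note mismatch = flash_expand_runs_mismatch[OF proper_framed_runs[OF assms(1)]
      proper_framed_runs[OF assms(2)] this]
  have "length (framed_runs as ms) - 1 = r + 1"
    using len by (simp add: framed_runs_def r_def)
  then show ?thesis
    using mismatch framed_runs_mismatch[OF len]
    unfolding flashback D_def r_def by simp
qed

end
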